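(* Let $n\ge 6$ and let $CB_n$ be the set of chemical bicyclic graphs on $n$ vertices. Define the following subsets of $CB_n$ (in each, all $m_{i,j}$ not listed are $0$): $\beta_2$: $n_4=0,n_3=2,n_2=n-2,n_1=0$, $m_{2,3}=4$, $m_{3,3}=1$, $m_{2,2}=n-4$; $\beta_3$: $n_4=0,n_3=2,n_2=n-2,n_1=0$, $m_{2,3}=6$, $m_{2,2}=n-5$; $\beta_9$: $n_4=0,n_3=3,n_2=n-4,n_1=1$, $m_{1,2}=1$, $m_{2,3}=3$, $m_{3,3}=3$, $m_{2,2}=n-6$. Let $G_1\in\beta_2$, $G_2\in\beta_3$, $G_3\in\beta_9$, and let $G\in CB_n$ not belong to $\beta_2\cup\beta_3\cup\beta_9$. Then $SO_{red}(G_1)<SO_{red}(G_2)<SO_{red}(G_3)<SO_{red}(G)$.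
   Context: All graphs are simple and connected. A chemical graph is a graph with maximum degree at most $4$; a bicyclic graph is a connected graph with $n$ vertices and $n+1$ edges. $d_G(u)$ is the degree of $u$, $n_i$ the number of vertices of degree $i$, and $m_{i,j}$ the number of edges joining a vertex of degree $i$ to a vertex of degree $j$. The reduced Sombor index is $SO_{red}(G)=\sum_{uv\in E(G)}\sqrt{(d_G(u)-1)^2+(d_G(v)-1)^2}$. *)

theory Defs
  imports Complex_Main
begin

definition simple_graph :: "'a set \<Rightarrow> 'a set set \<Rightarrow> bool" where
  "simple_graph V E \<longleftrightarrow> finite V \<and> (\<forall>e\<in>E. \<exists>u v. e = {u, v} \<and> u \<noteq> v \<and> u \<in> V \<and> v \<in> V)"

definition deg :: "'a set set \<Rightarrow> 'a \<Rightarrow> nat" where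
  "deg E v = card {e \<in> E. v \<in> e}"

definition adj :: "'a set set \<Rightarrow> ('a \<times> 'a) set" where
  "adj E = {(u, v). {u, v} \<in> E}"

definition connected_graph :: "'a set \<Rightarrow> 'a set set \<Rightarrow> bool" where
  "connected_graph V E \<longleftrightarrow> V \<noteq> {} \<and> (\<forall>u\<in>V. \<forall>v\<in>V. (u, v) \<in> (adj E)\<^sup>*)"

definition chemical_bicyclic :: "'a set \<Rightarrow> 'a set set \<Rightarrow> bool" where
  "chemical_bicyclic V E \<longleftrightarrow> simple_graph V E \<and> connected_graph V E \<and>
     card E = card V + 1 \<and> (\<forall>v\<in>V. deg E v \<le> 4)"

definition nvert :: "'a set \<Rightarrow> 'a set set \<Rightarrow> nat \<Rightarrow> nat" where
  "nvert V E i = card {v \<in> V. deg E v = i}"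

definition medge :: "'a set set \<Rightarrow> nat \<Rightarrow> nat \<Rightarrow> nat" where
  "medge E i j = card {e \<in> E. \<exists>u v. e = {u, v} \<and> u \<noteq> v \<and> deg E u = i \<and> deg E v = j}"

definition SO_red :: "'a set set \<Rightarrow> real" where
  "SO_red E = (\<Sum>e\<in>E. sqrt (\<Sum>v\<in>e. (real (deg E v) - 1)\<^sup>2))"

definition in_CB :: "nat \<Rightarrow> 'a set \<Rightarrow> 'a set set \<Rightarrow> bool" where
  "in_CB n V E \<longleftrightarrow> chemical_bicyclic V E \<and> card V = n"

definition beta2 :: "nat \<Rightarrow> 'a set \<Rightarrow> 'a set set \<Rightarrow> bool" where
  "beta2 n V E \<longleftrightarrow> in_CB n V E \<and>
     nvert V E 4 = 0 \<and> nvert V E 3 = 2 \<and> nvert V E 2 = n - 2 \<and> nvert V E 1 = 0 \<and>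
     (\<forall>i j. i \<le> j \<longrightarrow> medge E i j =
        (if (i, j) = (2, 3) then 4 else if (i, j) = (3, 3) then 1
         else if (i, j) = (2, 2) then n - 4 else 0))"

definition beta3 :: "nat \<Rightarrow> 'a set \<Rightarrow> 'a set set \<Rightarrow> bool" where
  "beta3 n V E \<longleftrightarrow> in_CB n V E \<and>
     nvert V E 4 = 0 \<and> nvert V E 3 = 2 \<and> nvert V E 2 = n - 2 \<and> nvert V E 1 = 0 \<and>
     (\<forall>i j. i \<le> j \<longrightarrow> medge E i j =
        (if (i, j) = (2, 3) then 6 else if (i, j) = (2, 2) then n - 5 else 0))"

definition beta9 :: "nat \<Rightarrow> 'a set \<Rightarrow> 'a set set \<Rightarrow> bool" where
  "beta9 n V E \<longleftrightarrow> in_CB n V E \<and>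
     nvert V E 4 = 0 \<and> nvert V E 3 = 3 \<and> nvert V E 2 = n - 4 \<and> nvert V E 1 = 1 \<and>
     (\<forall>i j. i \<le> j \<longrightarrow> medge E i j =
        (if (i, j) = (1, 2) then 1 else if (i, j) = (2, 3) then 3
         else if (i, j) = (3, 3) then 3 else if (i, j) = (2, 2) then n - 6 else 0))"

end

theory Submission
  imports Defs
begin

text \<open>Write \<open>w i j = \<surd>((i-1)\<^sup>2 + (j-1)\<^sup>2)\<close>. Grouping edges by the degrees of their ends,
  \<open>SO\<^sub>r\<^sub>e\<^sub>d(G) = (n+1)\<surd>2 + \<Sum> m\<^sub>i\<^sub>j (w i j - \<surd>2)\<close>, and the excess sum equals
  \<open>4\<surd>5 - 3\<surd>2 < 6\<surd>5 - 6\<surd>2 < 1 + 3\<surd>5 - \<surd>2\<close> on \<open>\<beta>\<^sub>2, \<beta>\<^sub>3, \<beta>\<^sub>9\<close>.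
  For any other \<open>G\<close>, charging each edge end to its vertex bounds the excess below by
  \<open>n\<^sub>1 + \<surd>2 (n\<^sub>3/2 + 2n\<^sub>4 + 2)\<close>, where \<open>n\<^sub>3 + 2n\<^sub>4 = n\<^sub>1 + 2\<close> by the handshake lemma and
  \<open>|E| = |V| + 1\<close>. This beats the \<open>\<beta>\<^sub>9\<close> value except when \<open>(n\<^sub>3, n\<^sub>4)\<close> is \<open>(0, 1)\<close>,
  \<open>(2, 0)\<close> or \<open>(3, 0)\<close>, and these few degree profiles are checked by hand: \<open>(2, 0)\<close> only
  allows \<open>\<beta>\<^sub>2\<close> and \<open>\<beta>\<^sub>3\<close>, and \<open>(3, 0)\<close> gives \<open>\<beta>\<^sub>9\<close> or a larger excess.\<close>

section \<open>Counting edges by the degrees of their ends\<close>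

definition edge_type :: "'a set set \<Rightarrow> 'a set \<Rightarrow> nat \<times> nat" where
  "edge_type E e = (Min (deg E ` e), Max (deg E ` e))"

definition sombor_weight :: "nat \<Rightarrow> nat \<Rightarrow> real" where
  "sombor_weight i j = sqrt ((real i - 1)\<^sup>2 + (real j - 1)\<^sup>2)"

lemma edge_type_doubleton:
  "edge_type E {u, v} = (min (deg E u) (deg E v), max (deg E u) (deg E v))"
  by (simp add: edge_type_def)

lemma simple_graph_edgeE:
  assumes "simple_graph V E" "e \<in> E"
  obtains u v where "e = {u, v}" "u \<noteq> v" "u \<in> V" "v \<in> V"
  using assms unfolding simple_graph_def by blast

lemma simple_graph_finite_edges: "simple_graph V E \<Longrightarrow> finite E"
  by (rule finite_subset[of E "Pow V"])
    (auto simp: simple_graph_def elim: simple_graph_edgeE)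

lemma SO_red_eq_sum_edge_type:
  assumes "simple_graph V E"
  shows "SO_red E = (\<Sum>e\<in>E. case_prod sombor_weight (edge_type E e))"
  unfolding SO_red_def
proof (rule sum.cong[OF refl])
  fix e assume "e \<in> E"
  then obtain u v where "e = {u, v}" "u \<noteq> v" using assms by (auto elim: simple_graph_edgeE)
  then show "sqrt (\<Sum>x\<in>e. (real (deg E x) - 1)\<^sup>2) = case_prod sombor_weight (edge_type E e)"
    by (cases "deg E u \<le> deg E v")
      (simp_all add: edge_type_doubleton sombor_weight_def min_def max_def add.commute)
qed

lemma medge_eq_card_edge_type:
  assumes "simple_graph V E" "i \<le> j"
  shows "medge E i j = card {e\<in>E. edge_type E e = (i, j)}"
  unfolding medge_def
proof (intro arg_cong[where f = card] Collect_cong conj_cong[OF refl])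
  fix e assume "e \<in> E"
  then obtain u v where e: "e = {u, v}" "u \<noteq> v" using assms(1) by (auto elim: simple_graph_edgeE)
  show "(\<exists>u v. e = {u, v} \<and> u \<noteq> v \<and> deg E u = i \<and> deg E v = j) \<longleftrightarrow> edge_type E e = (i, j)"
  proof
    assume "\<exists>u v. e = {u, v} \<and> u \<noteq> v \<and> deg E u = i \<and> deg E v = j"
    then show "edge_type E e = (i, j)" using assms(2) by (auto simp: edge_type_doubleton)
  next
    assume "edge_type E e = (i, j)"
    then show "\<exists>u v. e = {u, v} \<and> u \<noteq> v \<and> deg E u = i \<and> deg E v = j"
      using e by (cases "deg E u \<le> deg E v")
        (auto simp: edge_type_doubleton min_def max_def insert_commute)
  qed
qed

lemma sum_edges_by_type:
  fixes f :: "nat \<times> nat \<Rightarrow> 'b :: semiring_1"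
  assumes "simple_graph V E" "finite K" "\<forall>e\<in>E. edge_type E e \<in> K" "\<forall>(i, j)\<in>K. i \<le> j"
  shows "(\<Sum>e\<in>E. f (edge_type E e)) = (\<Sum>(i, j)\<in>K. of_nat (medge E i j) * f (i, j))"
proof -
  have "(\<Sum>e\<in>E. f (edge_type E e)) = (\<Sum>p\<in>K. \<Sum>e\<in>{e\<in>E. edge_type E e = p}. f (edge_type E e))"
    using assms(3) by (intro sum.group[symmetric] simple_graph_finite_edges[OF assms(1)] assms(2)) auto
  also have "\<dots> = (\<Sum>p\<in>K. of_nat (card {e\<in>E. edge_type E e = p}) * f p)"
    by (rule sum.cong) simp_all
  also have "\<dots> = (\<Sum>(i, j)\<in>K. of_nat (medge E i j) * f (i, j))"
    using assms(4) by (intro sum.cong) (auto simp: medge_eq_card_edge_type[OF assms(1)])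
  finally show ?thesis .
qed

lemma card_endpoints_of_degree:
  assumes "simple_graph V E" "e \<in> E"
  shows "card {x\<in>e. deg E x = i} = of_bool (fst (edge_type E e) = i) + of_bool (snd (edge_type E e) = i)"
proof -
  obtain u v where e: "e = {u, v}" "u \<noteq> v" using assms by (auto elim: simple_graph_edgeE)
  then have "{x\<in>e. deg E x = i} = (if deg E u = i then {u} else {}) \<union> (if deg E v = i then {v} else {})"
    by auto
  then show ?thesis using e
    by (cases "deg E u = i"; cases "deg E v = i") (auto simp: edge_type_doubleton min_def max_def)
qed

lemma sum_card_endpoints_of_degree:
  assumes "simple_graph V E"
  shows "(\<Sum>e\<in>E. card {x\<in>e. deg E x = i}) = i * nvert V E i"
proof -
  have fV: "finite V" using assms unfolding simple_graph_def by blast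
  have fE: "finite E" using simple_graph_finite_edges[OF assms] .
  let ?Vi = "{v\<in>V. deg E v = i}"
  have "i * nvert V E i = (\<Sum>v\<in>?Vi. deg E v)" unfolding nvert_def by simp
  also have "\<dots> = (\<Sum>v\<in>?Vi. \<Sum>e\<in>E. of_bool (v \<in> e))"
    unfolding deg_def by (intro sum.cong) (simp_all add: fE Int_def)
  also have "\<dots> = (\<Sum>e\<in>E. \<Sum>v\<in>?Vi. of_bool (v \<in> e))" by (rule sum.swap)
  also have "\<dots> = (\<Sum>e\<in>E. card {x\<in>e. deg E x = i})"
  proof (rule sum.cong[OF refl])
    fix e assume "e \<in> E"
    then have "?Vi \<inter> {v. v \<in> e} = {x\<in>e. deg E x = i}" using assms by (auto elim: simple_graph_edgeE)
    then show "(\<Sum>v\<in>?Vi. of_bool (v \<in> e)) = card {x\<in>e. deg E x = i}"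
      using fV by (simp add: sum.If_cases)
  qed
  finally show ?thesis by simp
qed

lemma nvert_handshake:
  assumes "simple_graph V E" "finite K" "\<forall>e\<in>E. edge_type E e \<in> K" "\<forall>(i, j)\<in>K. i \<le> j"
  shows "i * nvert V E i = (\<Sum>(k, l)\<in>K. medge E k l * (of_bool (k = i) + of_bool (l = i)))"
proof -
  have "i * nvert V E i = (\<Sum>e\<in>E. (\<lambda>(k, l). of_bool (k = i) + of_bool (l = i)) (edge_type E e))"
    unfolding sum_card_endpoints_of_degree[OF assms(1), symmetric]
    by (intro sum.cong) (auto simp: card_endpoints_of_degree[OF assms(1)] split: prod.split)
  also have "\<dots> = (\<Sum>(k, l)\<in>K. medge E k l * (of_bool (k = i) + of_bool (l = i)))"
    by (subst sum_edges_by_type[OF assms]) simp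
  finally show ?thesis .
qed

lemma card_eq_sum_nvert:
  assumes "finite V" "finite D" "deg E ` V \<subseteq> D"
  shows "card V = (\<Sum>i\<in>D. nvert V E i)"
proof -
  have "card V = (\<Sum>i\<in>D. \<Sum>v\<in>{v\<in>V. deg E v = i}. 1)"
    using sum.group[OF assms, of "\<lambda>_. 1::nat"] by simp
  then show ?thesis unfolding nvert_def by simp
qed

lemma medge_diag_le_choose:
  assumes "simple_graph V E"
  shows "medge E i i \<le> nvert V E i choose 2"
proof -
  have fV: "finite V" using assms unfolding simple_graph_def by blast
  let ?Vi = "{v\<in>V. deg E v = i}"
  have "{e\<in>E. edge_type E e = (i, i)} \<subseteq> {B. B \<subseteq> ?Vi \<and> card B = 2}"
  proof
    fix e assume e: "e \<in> {e\<in>E. edge_type E e = (i, i)}"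
    then obtain u v where uv: "e = {u, v}" "u \<noteq> v" "u \<in> V" "v \<in> V"
      using assms by (auto elim: simple_graph_edgeE)
    then have "deg E u = i" "deg E v = i"
      using e by (auto simp: edge_type_doubleton min_def max_def split: if_splits)
    then show "e \<in> {B. B \<subseteq> ?Vi \<and> card B = 2}" using uv by auto
  qed
  then have "card {e\<in>E. edge_type E e = (i, i)} \<le> card {B. B \<subseteq> ?Vi \<and> card B = 2}"
    using fV by (intro card_mono) auto
  also have "\<dots> = nvert V E i choose 2"
    unfolding nvert_def using fV by (intro n_subsets) auto
  finally show ?thesis using medge_eq_card_edge_type[OF assms, of i i] by simp
qed

section \<open>Edge types of connected chemical graphs\<close>

lemma connected_deg_pos:
  assumes "simple_graph V E" "connected_graph V E" "2 \<le> card V" "v \<in> V"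
  shows "1 \<le> deg E v"
proof -
  have "\<not> V \<subseteq> {v}"
  proof
    assume "V \<subseteq> {v}"
    then have "card V \<le> 1" using card_mono[of "{v}" V] by simp
    then show False using assms(3) by simp
  qed
  then obtain u where u: "u \<in> V" "u \<noteq> v" by blast
  have "(v, u) \<in> (adj E)\<^sup>+"
    using assms(2,4) u unfolding connected_graph_def by (auto simp: rtrancl_eq_or_trancl)
  then obtain w where "(v, w) \<in> adj E" by (auto dest: tranclD)
  then have "{e\<in>E. v \<in> e} \<noteq> {}" unfolding adj_def by auto
  moreover have "finite {e\<in>E. v \<in> e}" using simple_graph_finite_edges[OF assms(1)] by simp
  ultimately show ?thesis unfolding deg_def by (simp add: Suc_le_eq card_gt_0_iff)
qed

lemma connected_leaf_edge_spans:
  assumes "connected_graph V E" "{u, v} \<in> E" "u \<in> V" "deg E u = 1" "deg E v = 1"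
  shows "V \<subseteq> {u, v}"
proof -
  have only_edge: "{x, y} = {u, v}" if "x \<in> {u, v}" "{x, y} \<in> E" for x y
  proof -
    have "card {e\<in>E. x \<in> e} = 1" using that(1) assms(4,5) unfolding deg_def by auto
    then obtain e0 where e0: "{e\<in>E. x \<in> e} = {e0}" using card_1_singletonE by blast
    have "{x, y} \<in> {e\<in>E. x \<in> e}" "{u, v} \<in> {e\<in>E. x \<in> e}" using that assms(2) by auto
    then show ?thesis unfolding e0 by simp
  qed
  have "z \<in> {u, v}" if "(u, z) \<in> (adj E)\<^sup>*" for z
    using that
  proof (induction rule: rtrancl_induct)
    case (step y z)
    then have "{y, z} = {u, v}" using only_edge unfolding adj_def by simp
    then show ?case by (metis insertI1 insert_commute)
  qed simp
  then show ?thesis using assms(1,3) unfolding connected_graph_def by blast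
qed

text \<open>No type (1, 1): an edge joining two leaves is a whole component.\<close>

definition chemical_edge_types :: "(nat \<times> nat) set" where
  "chemical_edge_types = {(i, j). 1 \<le> i \<and> i \<le> j \<and> j \<le> 4 \<and> 2 \<le> j}"

lemma chemical_edge_types_eq:
  "chemical_edge_types = {(1,2), (1,3), (1,4), (2,2), (2,3), (2,4), (3,3), (3,4), (4,4)}"
  unfolding chemical_edge_types_def
proof (intro set_eqI iffI)
  fix p :: "nat \<times> nat" assume "p \<in> {(i, j). 1 \<le> i \<and> i \<le> j \<and> j \<le> 4 \<and> 2 \<le> j}"
  then obtain i j where p: "p = (i, j)" "1 \<le> i" "i \<le> j" "j \<le> 4" "2 \<le> j" by blast
  then have "i \<in> {1..4}" "j \<in> {2..4}" by auto
  then show "p \<in> {(1,2), (1,3), (1,4), (2,2), (2,3), (2,4), (3,3), (3,4), (4,4)}"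
    using p by (auto simp: numeral_eq_Suc atLeastAtMostSuc_conv)
qed auto

lemma chemical_edge_types_ordered: "\<forall>(i, j)\<in>chemical_edge_types. i \<le> j"
  by (auto simp: chemical_edge_types_def)

lemma finite_chemical_edge_types: "finite chemical_edge_types"
  by (simp add: chemical_edge_types_eq)

lemma sum_chemical_edge_types:
  "(\<Sum>p\<in>chemical_edge_types. f p) = f (1,2) + f (1,3) + f (1,4) + f (2,2) + f (2,3) + f (2,4)
     + f (3,3) + f (3,4) + f (4,4)"
  by (simp add: chemical_edge_types_eq add.assoc)

lemma edge_type_in_chemical_edge_types:
  assumes "simple_graph V E" "connected_graph V E" "3 \<le> card V" "\<forall>v\<in>V. deg E v \<le> 4" "e \<in> E"
  shows "edge_type E e \<in> chemical_edge_types"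
proof -
  obtain u v where uv: "e = {u, v}" "u \<noteq> v" "u \<in> V" "v \<in> V"
    using assms(1,5) by (auto elim: simple_graph_edgeE)
  have "1 \<le> deg E u" "1 \<le> deg E v" using connected_deg_pos[OF assms(1,2)] assms(3) uv by auto
  moreover have "deg E u \<le> 4" "deg E v \<le> 4" using assms(4) uv by auto
  moreover have "\<not> (deg E u = 1 \<and> deg E v = 1)"
  proof
    assume "deg E u = 1 \<and> deg E v = 1"
    then have "V \<subseteq> {u, v}" using connected_leaf_edge_spans[OF assms(2)] uv assms(5) by auto
    then have "card V \<le> 2" using card_mono[of "{u, v}" V] uv(2) by simp
    then show False using assms(3) by simp
  qed
  ultimately show ?thesis unfolding uv edge_type_doubleton chemical_edge_types_def by auto
qed

lemma in_CB_edge_types: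
  assumes "in_CB n V E" "3 \<le> n"
  shows "\<forall>e\<in>E. edge_type E e \<in> chemical_edge_types"
  using assms edge_type_in_chemical_edge_types[of V E]
  unfolding in_CB_def chemical_bicyclic_def by auto

definition bicyclic_degree_profile :: "nat \<Rightarrow> (nat \<Rightarrow> nat) \<Rightarrow> (nat \<Rightarrow> nat \<Rightarrow> nat) \<Rightarrow> bool" where
  "bicyclic_degree_profile n N m \<longleftrightarrow>
     N 1 + N 2 + N 3 + N 4 = n \<and>
     m 1 2 + m 1 3 + m 1 4 + m 2 2 + m 2 3 + m 2 4 + m 3 3 + m 3 4 + m 4 4 = n + 1 \<and>
     N 1 = m 1 2 + m 1 3 + m 1 4 \<and>
     2 * N 2 = m 1 2 + 2 * m 2 2 + m 2 3 + m 2 4 \<and>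
     3 * N 3 = m 1 3 + m 2 3 + 2 * m 3 3 + m 3 4 \<and>
     4 * N 4 = m 1 4 + m 2 4 + m 3 4 + 2 * m 4 4 \<and>
     m 3 3 \<le> N 3 choose 2 \<and> m 4 4 \<le> N 4 choose 2"

lemma in_CB_degree_profile:
  assumes cb: "in_CB n V E" and n: "3 \<le> n"
  shows "bicyclic_degree_profile n (nvert V E) (medge E)"
proof -
  have sg: "simple_graph V E" and conn: "connected_graph V E"
    and cV: "card V = n" and cE: "card E = n + 1" and deg4: "\<forall>v\<in>V. deg E v \<le> 4"
    using cb unfolding in_CB_def chemical_bicyclic_def by auto
  note by_type = sum_edges_by_type[OF sg finite_chemical_edge_types
      in_CB_edge_types[OF cb n] chemical_edge_types_ordered]
  note handshake = nvert_handshake[OF sg finite_chemical_edge_types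
      in_CB_edge_types[OF cb n] chemical_edge_types_ordered]
  have "card E = (\<Sum>(i, j)\<in>chemical_edge_types. medge E i j)"
    using by_type[of "\<lambda>_. 1 :: nat"] by simp
  then have edges: "medge E 1 2 + medge E 1 3 + medge E 1 4 + medge E 2 2 + medge E 2 3
      + medge E 2 4 + medge E 3 3 + medge E 3 4 + medge E 4 4 = n + 1"
    by (simp add: cE sum_chemical_edge_types)
  have "deg E ` V \<subseteq> {1..4}"
    using connected_deg_pos[OF sg conn] deg4 cV n by fastforce
  then have "card V = (\<Sum>i\<in>{1..4}. nvert V E i)"
    using sg by (intro card_eq_sum_nvert) (auto simp: simple_graph_def)
  then have vertices: "nvert V E 1 + nvert V E 2 + nvert V E 3 + nvert V E 4 = n"
    by (simp add: cV numeral_eq_Suc)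
  show ?thesis
    unfolding bicyclic_degree_profile_def
    using edges vertices handshake[of 1] handshake[of 2] handshake[of 3] handshake[of 4]
      medge_diag_le_choose[OF sg]
    by (simp add: sum_chemical_edge_types)
qed

section \<open>The excess of the reduced Sombor index over \<open>(n + 1)\<surd>2\<close>\<close>

definition sombor_excess :: "(nat \<Rightarrow> nat \<Rightarrow> nat) \<Rightarrow> real" where
  "sombor_excess m = (\<Sum>(i, j)\<in>chemical_edge_types. real (m i j) * (sombor_weight i j - sqrt 2))"

lemma SO_red_eq_sombor_excess:
  assumes cb: "in_CB n V E" and n: "3 \<le> n"
  shows "SO_red E = sombor_excess (medge E) + (real n + 1) * sqrt 2"
proof -
  have sg: "simple_graph V E" and cE: "card E = n + 1"
    using cb unfolding in_CB_def chemical_bicyclic_def by auto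
  note by_type = sum_edges_by_type[OF sg finite_chemical_edge_types
      in_CB_edge_types[OF cb n] chemical_edge_types_ordered]
  have "SO_red E = (\<Sum>(i, j)\<in>chemical_edge_types. real (medge E i j) * sombor_weight i j)"
    using SO_red_eq_sum_edge_type[OF sg] by_type[of "case_prod sombor_weight"] by simp
  moreover have "real n + 1 = (\<Sum>(i, j)\<in>chemical_edge_types. real (medge E i j))"
    using by_type[of "\<lambda>_. 1 :: real"] cE by simp
  ultimately show ?thesis
    unfolding sombor_excess_def
    by (simp add: right_diff_distrib sum_subtractf sum_distrib_right case_prod_beta)
qed

lemma sqrt_eq_mult_sqrt_2: "sqrt (real (k\<^sup>2 * 2)) = real k * sqrt 2"
  by (simp add: real_sqrt_mult)

lemma sombor_excess_eq:
  "sombor_excess m = real (m 1 2) * (1 - sqrt 2) + real (m 1 3) * (2 - sqrt 2)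
     + real (m 1 4) * (3 - sqrt 2) + real (m 2 3) * (sqrt 5 - sqrt 2)
     + real (m 2 4) * (sqrt 10 - sqrt 2) + real (m 3 3) * sqrt 2
     + real (m 3 4) * (sqrt 13 - sqrt 2) + real (m 4 4) * (2 * sqrt 2)"
proof -
  have "sqrt 8 = 2 * sqrt 2" "sqrt 18 = 3 * sqrt 2"
    using sqrt_eq_mult_sqrt_2[of 2] sqrt_eq_mult_sqrt_2[of 3] by simp_all
  then show ?thesis
    unfolding sombor_excess_def sum_chemical_edge_types
    by (simp add: sombor_weight_def algebra_simps)
qed

text \<open>The classes are pinned down by the counts \<open>m\<^sub>i\<^sub>j\<close> other than \<open>m\<^sub>2\<^sub>2\<close>;
  \<open>m\<^sub>2\<^sub>2\<close> and the \<open>n\<^sub>i\<close> then follow from the degree profile.\<close>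

definition beta2_edges :: "(nat \<Rightarrow> nat \<Rightarrow> nat) \<Rightarrow> bool" where
  "beta2_edges m \<longleftrightarrow> m 1 2 = 0 \<and> m 1 3 = 0 \<and> m 1 4 = 0 \<and> m 2 3 = 4 \<and> m 2 4 = 0 \<and>
     m 3 3 = 1 \<and> m 3 4 = 0 \<and> m 4 4 = 0"

definition beta3_edges :: "(nat \<Rightarrow> nat \<Rightarrow> nat) \<Rightarrow> bool" where
  "beta3_edges m \<longleftrightarrow> m 1 2 = 0 \<and> m 1 3 = 0 \<and> m 1 4 = 0 \<and> m 2 3 = 6 \<and> m 2 4 = 0 \<and>
     m 3 3 = 0 \<and> m 3 4 = 0 \<and> m 4 4 = 0"

definition beta9_edges :: "(nat \<Rightarrow> nat \<Rightarrow> nat) \<Rightarrow> bool" where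
  "beta9_edges m \<longleftrightarrow> m 1 2 = 1 \<and> m 1 3 = 0 \<and> m 1 4 = 0 \<and> m 2 3 = 3 \<and> m 2 4 = 0 \<and>
     m 3 3 = 3 \<and> m 3 4 = 0 \<and> m 4 4 = 0"

lemma sombor_excess_beta2: "beta2_edges m \<Longrightarrow> sombor_excess m = 4 * sqrt 5 - 3 * sqrt 2"
  by (simp add: beta2_edges_def sombor_excess_eq algebra_simps)

lemma sombor_excess_beta3: "beta3_edges m \<Longrightarrow> sombor_excess m = 6 * sqrt 5 - 6 * sqrt 2"
  by (simp add: beta3_edges_def sombor_excess_eq algebra_simps)

lemma sombor_excess_beta9: "beta9_edges m \<Longrightarrow> sombor_excess m = 1 + 3 * sqrt 5 - sqrt 2"
  by (simp add: beta9_edges_def sombor_excess_eq algebra_simps)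

lemma in_CB_medge_eqI:
  assumes cb: "in_CB n V E" and n: "3 \<le> n"
    and on_types: "\<forall>(i, j)\<in>chemical_edge_types. medge E i j = F i j"
    and off_types: "\<forall>i j. i \<le> j \<and> (i, j) \<notin> chemical_edge_types \<longrightarrow> F i j = 0"
  shows "\<forall>i j. i \<le> j \<longrightarrow> medge E i j = F i j"
proof (intro allI impI)
  fix i j :: nat assume "i \<le> j"
  show "medge E i j = F i j"
  proof (cases "(i, j) \<in> chemical_edge_types")
    case False
    have sg: "simple_graph V E" using cb unfolding in_CB_def chemical_bicyclic_def by simp
    have "{e\<in>E. edge_type E e = (i, j)} = {}" using in_CB_edge_types[OF cb n] False by auto
    then have "medge E i j = 0" using medge_eq_card_edge_type[OF sg \<open>i \<le> j\<close>] by (metis card.empty)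
    then show ?thesis using off_types \<open>i \<le> j\<close> False by simp
  qed (use on_types in auto)
qed

lemma beta2_iff_edges:
  assumes n: "3 \<le> n"
  shows "beta2 n V E \<longleftrightarrow> in_CB n V E \<and> beta2_edges (medge E)"
proof
  assume "beta2 n V E"
  then show "in_CB n V E \<and> beta2_edges (medge E)"
    unfolding beta2_def beta2_edges_def by auto
next
  assume "in_CB n V E \<and> beta2_edges (medge E)"
  then have cb: "in_CB n V E" and m: "beta2_edges (medge E)" by auto
  have "bicyclic_degree_profile n (nvert V E) (medge E)" using in_CB_degree_profile[OF cb n] .
  then have N: "nvert V E 1 = 0" "nvert V E 3 = 2" "nvert V E 4 = 0" "nvert V E 2 = n - 2"
    and m22: "medge E 2 2 = n - 4"
    using m unfolding bicyclic_degree_profile_def beta2_edges_def by auto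
  show "beta2 n V E"
    unfolding beta2_def
  proof (intro conjI in_CB_medge_eqI[OF cb n])
    show "\<forall>(i, j)\<in>chemical_edge_types. medge E i j = (if (i, j) = (2, 3) then 4
      else if (i, j) = (3, 3) then 1 else if (i, j) = (2, 2) then n - 4 else 0)"
      using m m22 by (simp add: chemical_edge_types_eq beta2_edges_def)
  qed (use cb N in \<open>auto simp: chemical_edge_types_eq\<close>)
qed

lemma beta3_iff_edges:
  assumes n: "3 \<le> n"
  shows "beta3 n V E \<longleftrightarrow> in_CB n V E \<and> beta3_edges (medge E)"
proof
  assume "beta3 n V E"
  then show "in_CB n V E \<and> beta3_edges (medge E)"
    unfolding beta3_def beta3_edges_def by auto
next
  assume "in_CB n V E \<and> beta3_edges (medge E)"
  then have cb: "in_CB n V E" and m: "beta3_edges (medge E)" by auto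
  have "bicyclic_degree_profile n (nvert V E) (medge E)" using in_CB_degree_profile[OF cb n] .
  then have N: "nvert V E 1 = 0" "nvert V E 3 = 2" "nvert V E 4 = 0" "nvert V E 2 = n - 2"
    and m22: "medge E 2 2 = n - 5"
    using m unfolding bicyclic_degree_profile_def beta3_edges_def by auto
  show "beta3 n V E"
    unfolding beta3_def
  proof (intro conjI in_CB_medge_eqI[OF cb n])
    show "\<forall>(i, j)\<in>chemical_edge_types. medge E i j =
      (if (i, j) = (2, 3) then 6 else if (i, j) = (2, 2) then n - 5 else 0)"
      using m m22 by (simp add: chemical_edge_types_eq beta3_edges_def)
  qed (use cb N in \<open>auto simp: chemical_edge_types_eq\<close>)
qed

lemma beta9_iff_edges:
  assumes n: "3 \<le> n"
  shows "beta9 n V E \<longleftrightarrow> in_CB n V E \<and> beta9_edges (medge E)"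
proof
  assume "beta9 n V E"
  then show "in_CB n V E \<and> beta9_edges (medge E)"
    unfolding beta9_def beta9_edges_def by auto
next
  assume "in_CB n V E \<and> beta9_edges (medge E)"
  then have cb: "in_CB n V E" and m: "beta9_edges (medge E)" by auto
  have "bicyclic_degree_profile n (nvert V E) (medge E)" using in_CB_degree_profile[OF cb n] .
  then have N: "nvert V E 1 = 1" "nvert V E 3 = 3" "nvert V E 4 = 0" "nvert V E 2 = n - 4"
    and m22: "medge E 2 2 = n - 6"
    using m unfolding bicyclic_degree_profile_def beta9_edges_def by auto
  show "beta9 n V E"
    unfolding beta9_def
  proof (intro conjI in_CB_medge_eqI[OF cb n])
    show "\<forall>(i, j)\<in>chemical_edge_types. medge E i j =
      (if (i, j) = (1, 2) then 1 else if (i, j) = (2, 3) then 3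
       else if (i, j) = (3, 3) then 3 else if (i, j) = (2, 2) then n - 6 else 0)"
      using m m22 by (simp add: chemical_edge_types_eq beta9_edges_def)
  qed (use cb N in \<open>auto simp: chemical_edge_types_eq\<close>)
qed

lemma sqrt_bounds:
  "1.41421 < sqrt 2" "sqrt 2 < 1.41422" "2.23606 < sqrt 5" "sqrt 5 < 2.23607" "3.16227 < sqrt 10"
  by (rule real_less_rsqrt real_less_lsqrt; simp add: power2_eq_square)+

lemma bicyclic_degree_profile_leaves:
  "bicyclic_degree_profile n N m \<Longrightarrow> N 3 + 2 * N 4 = N 1 + 2"
  unfolding bicyclic_degree_profile_def by linarith

text \<open>Charge each endpoint of degree 1, 2, 3, 4 with \<open>1 - \<surd>2, 0, \<surd>2/2, \<surd>2\<close>: every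
  edge weight \<open>sombor_weight i j - \<surd>2\<close> is at least the charge of its two endpoints, and a
  vertex of degree \<open>i\<close> is charged \<open>i\<close> times.\<close>

lemma sombor_excess_ge_charges:
  assumes "bicyclic_degree_profile n N m"
  shows "sombor_excess m \<ge>
    (1 - sqrt 2) * N 1 + sqrt 2 / 2 * (3 * real (N 3)) + sqrt 2 * (4 * real (N 4))"
proof -
  have N1: "real (N 1) = m 1 2 + m 1 3 + m 1 4"
    and N3: "3 * real (N 3) = m 1 3 + m 2 3 + 2 * m 3 3 + m 3 4"
    and N4: "4 * real (N 4) = m 1 4 + m 2 4 + m 3 4 + 2 * m 4 4"
    using assms unfolding bicyclic_degree_profile_def by (simp_all add: flip: of_nat_add of_nat_mult)
  have "sqrt 2 \<le> 2" by (rule real_le_lsqrt) simp_all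
  moreover have "3/2 * sqrt 2 \<le> sqrt 5" "2 * sqrt 2 \<le> sqrt 10" "5/2 * sqrt 2 \<le> sqrt 13"
    by (rule real_le_rsqrt; simp add: power_mult_distrib power_divide)+
  ultimately have "0 \<le> real (m 1 3) * (1 - sqrt 2 / 2) + real (m 1 4) * (2 - sqrt 2)
      + real (m 2 3) * (sqrt 5 - 3/2 * sqrt 2) + real (m 2 4) * (sqrt 10 - 2 * sqrt 2)
      + real (m 3 4) * (sqrt 13 - 5/2 * sqrt 2)"
    by (intro add_nonneg_nonneg mult_nonneg_nonneg) auto
  also have "\<dots> = sombor_excess m -
      ((1 - sqrt 2) * N 1 + sqrt 2 / 2 * (3 * real (N 3)) + sqrt 2 * (4 * real (N 4)))"
    unfolding sombor_excess_eq N1 N3 N4 by (simp add: algebra_simps)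
  finally show ?thesis by simp
qed

lemma sombor_excess_gt_if_branching:
  assumes P: "bicyclic_degree_profile n N m"
    and branching: "2 \<le> N 4 \<or> (N 4 = 1 \<and> 1 \<le> N 3) \<or> 4 \<le> N 3"
  shows "sombor_excess m > 1 + 3 * sqrt 5 - sqrt 2"
proof -
  define x where "x = real (N 3) / 2 + 2 * real (N 4) + 2"
  have N1: "real (N 1) = real (N 3) + 2 * real (N 4) - 2"
    using bicyclic_degree_profile_leaves[OF P] by (simp flip: of_nat_mult of_nat_add)
  have "(1 - sqrt 2) * N 1 + sqrt 2 / 2 * (3 * real (N 3)) + sqrt 2 * (4 * real (N 4))
      = real (N 3) + 2 * real (N 4) - 2 + sqrt 2 * x"
    unfolding N1 x_def by (simp add: algebra_simps)
  then have "sombor_excess m \<ge> real (N 3) + 2 * real (N 4) - 2 + sqrt 2 * x"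
    using sombor_excess_ge_charges[OF P] by linarith
  moreover have "sqrt 2 * x \<ge> 1.41421 * x"
    using sqrt_bounds(1) unfolding x_def by (intro mult_right_mono) auto
  moreover have "real (N 3) + 2 * real (N 4) - 2 + 1.41421 * x > 1 + 3 * 2.23607 - 1.41421"
  proof -
    have "2 \<le> real (N 4) \<or> (real (N 4) = 1 \<and> 1 \<le> real (N 3)) \<or> 4 \<le> real (N 3)"
      using branching by auto
    moreover have "0 \<le> real (N 3)" "0 \<le> real (N 4)" by simp_all
    ultimately show ?thesis unfolding x_def by (elim disjE conjE) (simp_all add: field_simps)
  qed
  ultimately show ?thesis using sqrt_bounds by linarith
qed

lemma sombor_excess_gt_if_one_degree4:
  assumes P: "bicyclic_degree_profile n N m" and "N 4 = 1" "N 3 = 0"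
  shows "sombor_excess m > 1 + 3 * sqrt 5 - sqrt 2"
proof -
  have "m 1 2 = 0" "m 1 3 = 0" "m 1 4 = 0" "m 2 3 = 0" "m 3 3 = 0" "m 3 4 = 0" "m 4 4 = 0"
    "m 2 4 = 4"
    using P assms(2,3) bicyclic_degree_profile_leaves[OF P]
    unfolding bicyclic_degree_profile_def by (auto simp: choose_two)
  then show ?thesis using sqrt_bounds by (simp add: sombor_excess_eq)
qed

lemma sombor_excess_gt_unless_beta9:
  assumes P: "bicyclic_degree_profile n N m" and "N 4 = 0" "N 3 = 3"
  shows "sombor_excess m > 1 + 3 * sqrt 5 - sqrt 2 \<or> beta9_edges m"
proof -
  have zero: "m 1 4 = 0" "m 2 4 = 0" "m 3 4 = 0" "m 4 4 = 0"
    and leaf: "m 1 2 + m 1 3 = 1" and deg3: "m 1 3 + m 2 3 + 2 * m 3 3 = 9"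
    and "m 3 3 \<le> 3"
    using P assms(2,3) bicyclic_degree_profile_leaves[OF P]
    unfolding bicyclic_degree_profile_def by (auto simp: choose_two)
  then consider "m 3 3 = 0" | "m 3 3 = 1" | "m 3 3 = 2" | "m 3 3 = 3" by linarith
  then show ?thesis
    using leaf deg3 zero sqrt_bounds
    by cases (auto simp: sombor_excess_eq beta9_edges_def add_is_1)
qed

lemma beta2_or_beta3_edges:
  assumes P: "bicyclic_degree_profile n N m" and "N 4 = 0" "N 3 = 2"
  shows "beta2_edges m \<or> beta3_edges m"
proof -
  have "m 1 2 = 0" "m 1 3 = 0" "m 1 4 = 0" "m 2 4 = 0" "m 3 4 = 0" "m 4 4 = 0"
    and "m 2 3 + 2 * m 3 3 = 6" "m 3 3 \<le> 1"
    using P assms(2,3) bicyclic_degree_profile_leaves[OF P]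
    unfolding bicyclic_degree_profile_def by (auto simp: choose_two)
  moreover have "m 3 3 = 0 \<or> m 3 3 = 1" using \<open>m 3 3 \<le> 1\<close> by linarith
  ultimately show ?thesis unfolding beta2_edges_def beta3_edges_def by auto
qed

lemma sombor_excess_cases:
  assumes P: "bicyclic_degree_profile n N m"
  shows "sombor_excess m > 1 + 3 * sqrt 5 - sqrt 2 \<or> beta2_edges m \<or> beta3_edges m \<or> beta9_edges m"
proof -
  consider "2 \<le> N 4 \<or> (N 4 = 1 \<and> 1 \<le> N 3) \<or> 4 \<le> N 3"
    | "N 4 = 1" "N 3 = 0" | "N 4 = 0" "N 3 = 3" | "N 4 = 0" "N 3 = 2"
    using bicyclic_degree_profile_leaves[OF P] by linarith
  then show ?thesis
    using sombor_excess_gt_if_branching[OF P] sombor_excess_gt_if_one_degree4[OF P]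
      sombor_excess_gt_unless_beta9[OF P] beta2_or_beta3_edges[OF P]
    by cases blast+
qed

lemma SO_red_beta2:
  assumes "3 \<le> n" "beta2 n V E"
  shows "SO_red E = 4 * sqrt 5 - 3 * sqrt 2 + (real n + 1) * sqrt 2"
  using assms SO_red_eq_sombor_excess[of n V E] beta2_iff_edges[of n V E] sombor_excess_beta2
  by auto

lemma SO_red_beta3:
  assumes "3 \<le> n" "beta3 n V E"
  shows "SO_red E = 6 * sqrt 5 - 6 * sqrt 2 + (real n + 1) * sqrt 2"
  using assms SO_red_eq_sombor_excess[of n V E] beta3_iff_edges[of n V E] sombor_excess_beta3
  by auto

lemma SO_red_beta9:
  assumes "3 \<le> n" "beta9 n V E"
  shows "SO_red E = 1 + 3 * sqrt 5 - sqrt 2 + (real n + 1) * sqrt 2"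
  using assms SO_red_eq_sombor_excess[of n V E] beta9_iff_edges[of n V E] sombor_excess_beta9
  by auto

lemma SO_red_gt_outside_betas:
  assumes n: "3 \<le> n" and cb: "in_CB n V E"
    and "\<not> beta2 n V E" "\<not> beta3 n V E" "\<not> beta9 n V E"
  shows "SO_red E > 1 + 3 * sqrt 5 - sqrt 2 + (real n + 1) * sqrt 2"
proof -
  have "sombor_excess (medge E) > 1 + 3 * sqrt 5 - sqrt 2"
    using sombor_excess_cases[OF in_CB_degree_profile[OF cb n]] assms(3-5) cb
      beta2_iff_edges[OF n] beta3_iff_edges[OF n] beta9_iff_edges[OF n]
    by blast
  then show ?thesis using SO_red_eq_sombor_excess[OF cb n] by simp
qed

theorem theorem3p10:
  fixes n :: nat
    and V1 :: "'a set" and E1 :: "'a set set"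
    and V2 :: "'b set" and E2 :: "'b set set"
    and V3 :: "'c set" and E3 :: "'c set set"
    and V :: "'d set" and E :: "'d set set"
  assumes "n \<ge> 6"
    and "beta2 n V1 E1"
    and "beta3 n V2 E2"
    and "beta9 n V3 E3"
    and "in_CB n V E"
    and "\<not> beta2 n V E" and "\<not> beta3 n V E" and "\<not> beta9 n V E"
  shows "SO_red E1 < SO_red E2 \<and> SO_red E2 < SO_red E3 \<and> SO_red E3 < SO_red E"
proof -
  have n: "3 \<le> n" using assms(1) by simp
  show ?thesis
    using SO_red_beta2[OF n assms(2)] SO_red_beta3[OF n assms(3)] SO_red_beta9[OF n assms(4)]
      SO_red_gt_outside_betas[OF n assms(5-8)] sqrt_bounds
    by linarith
qed

end
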